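(* Let $n,k$ be positive integers and $K=\min(\lfloor (n+k)/2\rfloor, n)$. Then \[ |\mathrm{Hom}^1(P_n,P_k)| = \sum_{l=\lceil (n-1)/2\rceil}^{K-1} |\mathcal L(l,\, n-1-l;\, 0,\, k-1)|. \]
   Context: For a positive integer $m$, $P_m$ denotes the path with vertex set $[m]=\{1,\dots,m\}$ in which $i$ and $j$ are adjacent iff $|i-j|=1$; $\mathrm{Hom}(P_n,P_k)$ is the set of maps $f:[n]\to[k]$ with $|f(i)-f(i+1)|=1$ for $1\le i\le n-1$, and $\mathrm{Hom}^1(P_n,P_k)=\{f\in\mathrm{Hom}(P_n,P_k): f(1)=1\}$. A lattice path from the origin to $(a,b)\in\mathbb N^2$ is a sequence of points of $\mathbb Z^2$ starting at $(0,0)$ and ending at $(a,b)$, each step being $(1,0)$ (east) or $(0,1)$ (north). For nonnegative integers $a,b,t,s$ with $a+t\ge b\ge a-s$, $\mathcal L(a,b;t,s)$ denotes the set of lattice paths from $(0,0)$ to $(a,b)$ all of whose points $(x,y)$ satisfy $x-s\le y\le x+t$. *)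

theory Defs
  imports Complex_Main "HOL-Library.FuncSet"
begin

definition Hom :: "nat \<Rightarrow> nat \<Rightarrow> (nat \<Rightarrow> nat) set" where
  "Hom n k = {f \<in> {1..n} \<rightarrow>\<^sub>E {1..k}.
     \<forall>i. 1 \<le> i \<and> i \<le> n - 1 \<longrightarrow> (f i = f (i+1) + 1 \<or> f (i+1) = f i + 1)}"

definition Hom1 :: "nat \<Rightarrow> nat \<Rightarrow> (nat \<Rightarrow> nat) set" where
  "Hom1 n k = {f \<in> Hom n k. f 1 = 1}"

definition is_lattice_path :: "nat \<Rightarrow> nat \<Rightarrow> (int \<times> int) list \<Rightarrow> bool" where
  "is_lattice_path a b p \<longleftrightarrow> p \<noteq> [] \<and> hd p = (0,0) \<and> last p = (int a, int b) \<and>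
     (\<forall>i. i + 1 < length p \<longrightarrow>
        (p ! (i+1) = (fst (p ! i) + 1, snd (p ! i)) \<or> p ! (i+1) = (fst (p ! i), snd (p ! i) + 1)))"

definition LP :: "nat \<Rightarrow> nat \<Rightarrow> nat \<Rightarrow> nat \<Rightarrow> (int \<times> int) list set" where
  "LP a b t s = {p. is_lattice_path a b p \<and>
     (\<forall>(x,y) \<in> set p. x - int s \<le> y \<and> y \<le> x + int t)}"

end

theory Submission
  imports Defs
begin

(* A homomorphism f : P_n -> P_k with f(1) = 1 is determined by its
   sequence of n - 1 steps f(i+1) - f(i) = +1 or -1.  Encoding an up-step by True and
   a down-step by False, f(i) = 1 + (height of the first i - 1 steps), so Hom^1(P_n,P_k)
   is in bijection with the step words of length n - 1 all of whose prefix heights lie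
   in [0, k-1].  On the other hand, reading True as an east step and False as a north
   step, a word with a up-steps and b down-steps traces a lattice path to (a,b), and the
   strip condition x - s <= y <= x + t is exactly -t <= prefix height <= s; hence
   L(a,b;t,s) is in bijection with such words.  Grouping the step words for
   Hom^1(P_n,P_k) by their number l of up-steps (which is forced into the range
   ceil((n-1)/2) <= l <= K - 1 by the height constraint on the whole word) gives the
   formula. *)

definition ups :: "bool list \<Rightarrow> nat" where
  "ups ds = length (filter id ds)"

definition downs :: "bool list \<Rightarrow> nat" where
  "downs ds = length (filter Not ds)"

definition height :: "bool list \<Rightarrow> int" where
  "height ds = int (ups ds) - int (downs ds)"

lemma ups_downs_height_Nil [simp]: "ups [] = 0" "downs [] = 0" "height [] = 0"
  by (simp_all add: ups_def downs_def height_def)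

lemma ups_downs_height_snoc [simp]:
  "ups (xs @ [b]) = ups xs + (if b then 1 else 0)"
  "downs (xs @ [b]) = downs xs + (if b then 0 else 1)"
  "height (xs @ [b]) = height xs + (if b then 1 else -1)"
  by (simp_all add: ups_def downs_def height_def)

lemma ups_plus_downs: "ups ds + downs ds = length ds"
  unfolding ups_def downs_def using sum_length_filter_compl[of id ds] by simp

lemma height_take_Suc:
  "j < length ds \<Longrightarrow> height (take (Suc j) ds) = height (take j ds) + (if ds ! j then 1 else -1)"
  by (simp add: take_Suc_conv_app_nth)

lemma word_eqI_prefix_heights:
  assumes len: "length ds = length es"
    and heights: "\<And>j. j \<le> length ds \<Longrightarrow> height (take j ds) = height (take j es)"
  shows "ds = es"
proof (rule nth_equalityI[OF len])
  fix i assume i: "i < length ds"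
  have "height (take i ds) = height (take i es)"
    and "height (take (Suc i) ds) = height (take (Suc i) es)"
    using heights i by auto
  then show "ds ! i = es ! i"
    using i len by (auto simp: height_take_Suc split: if_splits)
qed

definition in_strip :: "nat \<Rightarrow> nat \<Rightarrow> bool list \<Rightarrow> bool" where
  "in_strip t s ds \<longleftrightarrow>
     (\<forall>j \<le> length ds. - int t \<le> height (take j ds) \<and> height (take j ds) \<le> int s)"

definition path_words :: "nat \<Rightarrow> nat \<Rightarrow> nat \<Rightarrow> nat \<Rightarrow> bool list set" where
  "path_words a b t s = {ds. ups ds = a \<and> downs ds = b \<and> in_strip t s ds}"

lemma finite_path_words: "finite (path_words a b t s)"
proof (rule finite_subset)
  show "path_words a b t s \<subseteq> {ds. set ds \<subseteq> UNIV \<and> length ds = a + b}"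
    by (auto simp: path_words_def simp flip: ups_plus_downs)
  show "finite {ds :: bool list. set ds \<subseteq> UNIV \<and> length ds = a + b}"
    by (rule finite_lists_length_eq) simp
qed

definition points :: "bool list \<Rightarrow> (int \<times> int) list" where
  "points ds = map (\<lambda>j. (int (ups (take j ds)), int (downs (take j ds)))) [0..<Suc (length ds)]"

lemma length_points [simp]: "length (points ds) = Suc (length ds)"
  by (simp add: points_def)

lemma nth_points:
  "j \<le> length ds \<Longrightarrow> points ds ! j = (int (ups (take j ds)), int (downs (take j ds)))"
  by (simp add: points_def less_Suc_eq_le nth_map_upt del: upt_Suc)

(* The visited points determine the prefix heights, hence the word. *)
lemma inj_points: "inj points"
proof (rule injI)
  fix ds es assume eq: "points ds = points es"
  then have len: "length ds = length es"
    by (metis length_points Suc_inject)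
  show "ds = es"
  proof (rule word_eqI_prefix_heights[OF len])
    fix j assume "j \<le> length ds"
    then have "points ds ! j = points es ! j" and "j \<le> length es"
      using eq len by auto
    then show "height (take j ds) = height (take j es)"
      using \<open>j \<le> length ds\<close> by (simp add: nth_points height_def)
  qed
qed

lemma points_in_LP:
  assumes "ds \<in> path_words a b t s"
  shows "points ds \<in> LP a b t s"
proof -
  have ab: "ups ds = a" "downs ds = b" and strip: "in_strip t s ds"
    using assms by (auto simp: path_words_def)
  have lattice: "is_lattice_path a b (points ds)"
    unfolding is_lattice_path_def
  proof (intro conjI allI impI)
    have "points ds ! 0 = (0, 0)" by (simp add: nth_points)
    then show "points ds \<noteq> []" and "hd (points ds) = (0, 0)"
      by (auto simp: hd_conv_nth simp flip: length_greater_0_conv)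
    have "last (points ds) = points ds ! length ds"
      by (simp add: last_conv_nth flip: length_greater_0_conv)
    then show "last (points ds) = (int a, int b)"
      by (simp add: nth_points ab)
    fix i assume "i + 1 < length (points ds)"
    then show "points ds ! (i + 1) = (fst (points ds ! i) + 1, snd (points ds ! i)) \<or>
               points ds ! (i + 1) = (fst (points ds ! i), snd (points ds ! i) + 1)"
      by (simp add: nth_points take_Suc_conv_app_nth)
  qed
  have "x - int s \<le> y \<and> y \<le> x + int t" if mem: "(x, y) \<in> set (points ds)" for x y
  proof -
    obtain j where "j < length (points ds)" and xy: "points ds ! j = (x, y)"
      using mem unfolding in_set_conv_nth by blast
    then have j: "j \<le> length ds" by simp
    then have "- int t \<le> height (take j ds) \<and> height (take j ds) \<le> int s"
      using strip by (simp add: in_strip_def)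
    then show ?thesis
      using xy j by (simp add: nth_points height_def)
  qed
  with lattice show ?thesis by (auto simp: LP_def)
qed

(* Every lattice path in the strip is traced by a word: record whether each step
   goes east. *)
lemma LP_points_word:
  assumes p: "p \<in> LP a b t s"
  shows "\<exists>ds \<in> path_words a b t s. p = points ds"
proof -
  have lattice: "is_lattice_path a b p"
    and strip: "\<And>x y. (x, y) \<in> set p \<Longrightarrow> x - int s \<le> y \<and> y \<le> x + int t"
    using p by (auto simp: LP_def)
  have ne: "p \<noteq> []" using lattice by (simp add: is_lattice_path_def)
  define ds where "ds = map (\<lambda>i. fst (p ! Suc i) = fst (p ! i) + 1) [0..<length p - 1]"
  have len_p: "length p = Suc (length ds)"
    using ne by (simp add: ds_def)
  have nth_p: "j < length p \<Longrightarrow> p ! j = (int (ups (take j ds)), int (downs (take j ds)))" for j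
  proof (induction j)
    case 0
    then show ?case using lattice ne by (simp add: is_lattice_path_def hd_conv_nth)
  next
    case (Suc j)
    then have j: "j < length ds" and IH: "p ! j = (int (ups (take j ds)), int (downs (take j ds)))"
      using len_p by simp_all
    have "p ! Suc j = (fst (p ! j) + 1, snd (p ! j)) \<or> p ! Suc j = (fst (p ! j), snd (p ! j) + 1)"
      using lattice Suc.prems by (simp add: is_lattice_path_def)
    moreover have "ds ! j = (fst (p ! Suc j) = fst (p ! j) + 1)"
      using j by (simp add: ds_def)
    ultimately show ?case
      using IH j by (auto simp: take_Suc_conv_app_nth)
  qed
  have p_eq: "p = points ds"
    by (rule nth_equalityI) (simp_all add: len_p nth_p nth_points less_Suc_eq_le)
  have "last p = (int a, int b)"
    using lattice by (simp add: is_lattice_path_def)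
  then have ab: "ups ds = a" "downs ds = b"
    using nth_p[of "length ds"] len_p ne by (simp_all add: last_conv_nth)
  have "in_strip t s ds"
    unfolding in_strip_def
  proof (intro allI impI)
    fix j assume "j \<le> length ds"
    then have "p ! j \<in> set p" using len_p by simp
    then show "- int t \<le> height (take j ds) \<and> height (take j ds) \<le> int s"
      using strip nth_p[of j] \<open>j \<le> length ds\<close> len_p by (force simp: height_def)
  qed
  with ab p_eq show ?thesis by (auto simp: path_words_def)
qed

lemma card_LP: "card (LP a b t s) = card (path_words a b t s)"
proof -
  have "LP a b t s = points ` path_words a b t s"
    using points_in_LP LP_points_word by blast
  moreover have "inj_on points (path_words a b t s)"
    using inj_points by (rule inj_on_subset) simp
  ultimately show ?thesis by (simp add: card_image)
qed

definition step_words :: "nat \<Rightarrow> nat \<Rightarrow> bool list set" where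
  "step_words n s = {ds. length ds = n - 1 \<and> in_strip 0 s ds}"

definition hom_of_word :: "nat \<Rightarrow> bool list \<Rightarrow> nat \<Rightarrow> nat" where
  "hom_of_word n ds = restrict (\<lambda>i. nat (1 + height (take (i - 1) ds))) {1..n}"

lemma hom_of_word_apply:
  "i \<in> {1..n} \<Longrightarrow> hom_of_word n ds i = nat (1 + height (take (i - 1) ds))"
  by (simp add: hom_of_word_def)

lemma hom_of_word_in_Hom1:
  assumes n: "n \<ge> 1" and k: "k \<ge> 1" and ds: "ds \<in> step_words n (k - 1)"
  shows "hom_of_word n ds \<in> Hom1 n k"
proof -
  have len: "length ds = n - 1" and strip: "in_strip 0 (k - 1) ds"
    using ds by (auto simp: step_words_def)
  have bound: "j \<le> n - 1 \<Longrightarrow> 0 \<le> height (take j ds) \<and> height (take j ds) \<le> int (k - 1)" for j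
    using strip len by (auto simp: in_strip_def)
  have codomain: "hom_of_word n ds \<in> {1..n} \<rightarrow>\<^sub>E {1..k}"
  proof (rule PiE_I)
    fix i assume i: "i \<in> {1..n}"
    then have "0 \<le> height (take (i - 1) ds) \<and> height (take (i - 1) ds) \<le> int (k - 1)"
      by (intro bound) auto
    then show "hom_of_word n ds i \<in> {1..k}"
      using k by (auto simp: hom_of_word_apply[OF i])
  qed (auto simp: hom_of_word_def)
  have steps: "hom_of_word n ds i = hom_of_word n ds (i + 1) + 1 \<or>
               hom_of_word n ds (i + 1) = hom_of_word n ds i + 1"
    if i: "1 \<le> i" "i \<le> n - 1" for i
  proof -
    have step: "height (take i ds) = height (take (i - 1) ds) + (if ds ! (i - 1) then 1 else -1)"
      using height_take_Suc[of "i - 1" ds] i len by simp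
    have "0 \<le> height (take (i - 1) ds)" "0 \<le> height (take i ds)"
      using bound[of "i - 1"] bound[of i] i by simp_all
    moreover have "i \<in> {1..n}" "i + 1 \<in> {1..n}"
      using i n by auto
    ultimately have "int (hom_of_word n ds i) = 1 + height (take (i - 1) ds)"
      and "int (hom_of_word n ds (i + 1)) = 1 + height (take i ds)"
      by (simp_all add: hom_of_word_apply)
    with step show ?thesis
      by (cases "ds ! (i - 1)") simp_all
  qed
  show ?thesis
    using codomain steps n by (auto simp: Hom1_def Hom_def hom_of_word_def)
qed

(* The values of the homomorphism recover the prefix heights, hence the word. *)
lemma inj_on_hom_of_word:
  assumes n: "n \<ge> 1"
  shows "inj_on (hom_of_word n) (step_words n s)"
proof (rule inj_onI)
  fix ds es assume ds: "ds \<in> step_words n s" and es: "es \<in> step_words n s"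
    and eq: "hom_of_word n ds = hom_of_word n es"
  have len: "length ds = n - 1" "length es = n - 1"
    using ds es by (auto simp: step_words_def)
  show "ds = es"
  proof (rule word_eqI_prefix_heights)
    fix j assume j: "j \<le> length ds"
    have "hom_of_word n ds (Suc j) = hom_of_word n es (Suc j)" using eq by simp
    moreover have "0 \<le> height (take j ds)" "0 \<le> height (take j es)"
      using ds es j len by (auto simp: step_words_def in_strip_def)
    moreover have "Suc j \<in> {1..n}"
      using j len n by auto
    ultimately show "height (take j ds) = height (take j es)"
      by (simp add: hom_of_word_apply)
  qed (use len in simp)
qed

lemma Hom1_from_word:
  assumes n: "n \<ge> 1" and k: "k \<ge> 1" and f: "f \<in> Hom1 n k"
  shows "\<exists>ds \<in> step_words n (k - 1). f = hom_of_word n ds"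
proof -
  have codomain: "f \<in> {1..n} \<rightarrow>\<^sub>E {1..k}" and f1: "f 1 = 1"
    and steps: "\<And>i. 1 \<le> i \<Longrightarrow> i \<le> n - 1 \<Longrightarrow> f i = f (i + 1) + 1 \<or> f (i + 1) = f i + 1"
    using f by (auto simp: Hom1_def Hom_def)
  define ds where "ds = map (\<lambda>i. f (Suc (Suc i)) = Suc (f (Suc i))) [0..<n - 1]"
  have len: "length ds = n - 1" by (simp add: ds_def)
  have value_height: "j < n \<Longrightarrow> int (f (Suc j)) = 1 + height (take j ds)" for j
  proof (induction j)
    case 0
    then show ?case using f1 by simp
  next
    case (Suc j)
    then have j: "j < length ds" and IH: "int (f (Suc j)) = 1 + height (take j ds)"
      using len by simp_all
    have "f (Suc j) = f (Suc (Suc j)) + 1 \<or> f (Suc (Suc j)) = f (Suc j) + 1"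
      using steps[of "Suc j"] Suc.prems by simp
    moreover have "ds ! j = (f (Suc (Suc j)) = Suc (f (Suc j)))"
      using j len by (simp add: ds_def)
    ultimately show ?case
      using IH j by (auto simp: height_take_Suc)
  qed
  have "in_strip 0 (k - 1) ds"
    unfolding in_strip_def
  proof (intro allI impI)
    fix j assume "j \<le> length ds"
    then have "j < n" using len n by simp
    then have "f (Suc j) \<in> {1..k}" using codomain by auto
    then show "- int 0 \<le> height (take j ds) \<and> height (take j ds) \<le> int (k - 1)"
      using value_height[OF \<open>j < n\<close>] k by auto
  qed
  moreover have "f = hom_of_word n ds"
  proof
    fix i
    show "f i = hom_of_word n ds i"
    proof (cases "i \<in> {1..n}")
      case True
      then have "i - 1 < n" by auto
      then have "int (f i) = 1 + height (take (i - 1) ds)"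
        using value_height[of "i - 1"] True by (simp add: Suc_diff_1)
      then have "f i = nat (1 + height (take (i - 1) ds))"
        by (metis nat_int)
      also have "\<dots> = hom_of_word n ds i"
        using hom_of_word_apply[OF True] by simp
      finally show ?thesis .
    next
      case False
      then have "hom_of_word n ds i = undefined"
        by (auto simp: hom_of_word_def)
      with PiE_arb[OF codomain False] show ?thesis by simp
    qed
  qed
  ultimately show ?thesis using len by (auto simp: step_words_def)
qed

lemma card_Hom1:
  assumes "n \<ge> 1" "k \<ge> 1"
  shows "card (Hom1 n k) = card (step_words n (k - 1))"
proof -
  have "hom_of_word n ` step_words n (k - 1) = Hom1 n k"
    using hom_of_word_in_Hom1[OF assms] Hom1_from_word[OF assms] by blast
  with card_image[OF inj_on_hom_of_word[OF assms(1)], of "k - 1"] show ?thesis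
    by simp
qed

lemma ups_range:
  fixes l m n k :: nat
  assumes "l + m = n - 1" "m \<le> l" "l \<le> m + (k - 1)" "n \<ge> 1" "k \<ge> 1"
  shows "l \<in> {n div 2 .. min ((n + k) div 2) n - 1}"
proof -
  have "n div 2 \<le> (2 * l + 1) div 2"
    using assms by (intro div_le_mono) linarith
  moreover have "(2 * (l + 1)) div 2 \<le> (n + k) div 2"
    using assms by (intro div_le_mono) arith
  ultimately show ?thesis
    using assms by auto
qed

lemma step_words_by_ups:
  assumes "n \<ge> 1" "k \<ge> 1"
  shows "step_words n (k - 1) =
    (\<Union>l \<in> {n div 2 .. min ((n + k) div 2) n - 1}. path_words l (n - 1 - l) 0 (k - 1))"
proof (intro equalityI subsetI)
  fix ds assume "ds \<in> step_words n (k - 1)"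
  then have len: "ups ds + downs ds = n - 1" and strip: "in_strip 0 (k - 1) ds"
    by (auto simp: step_words_def ups_plus_downs)
  have "0 \<le> height ds" "height ds \<le> int (k - 1)"
    using strip by (auto simp: in_strip_def dest: spec[of _ "length ds"])
  then have "ups ds \<in> {n div 2 .. min ((n + k) div 2) n - 1}"
    using len assms by (intro ups_range) (auto simp: height_def)
  moreover have "ds \<in> path_words (ups ds) (n - 1 - ups ds) 0 (k - 1)"
    using len strip by (auto simp: path_words_def)
  ultimately show "ds \<in> (\<Union>l \<in> {n div 2 .. min ((n + k) div 2) n - 1}. path_words l (n - 1 - l) 0 (k - 1))"
    by blast
next
  fix ds assume "ds \<in> (\<Union>l \<in> {n div 2 .. min ((n + k) div 2) n - 1}. path_words l (n - 1 - l) 0 (k - 1))"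
  then obtain l where "l \<le> min ((n + k) div 2) n - 1" "ds \<in> path_words l (n - 1 - l) 0 (k - 1)"
    by auto
  then have "l \<le> n - 1" and "ups ds = l" "downs ds = n - 1 - l" "in_strip 0 (k - 1) ds"
    by (auto simp: path_words_def)
  moreover from this have "length ds = n - 1"
    by (simp flip: ups_plus_downs)
  ultimately show "ds \<in> step_words n (k - 1)"
    by (simp add: step_words_def)
qed

lemma nat_ceiling_half: "nat \<lceil>(real n - 1) / 2\<rceil> = n div 2"
proof -
  have "real n = 2 * real (n div 2) + real (n mod 2)"
    by (metis of_nat_add of_nat_mult of_nat_numeral div_mult_mod_eq mult.commute)
  moreover have "n mod 2 = 0 \<or> n mod 2 = 1" by auto
  ultimately have "\<lceil>(real n - 1) / 2\<rceil> = int (n div 2)"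
    by (intro ceiling_unique) auto
  then show ?thesis by simp
qed

theorem mainTheorem3:
  fixes n k :: nat
  assumes "n \<ge> 1" and "k \<ge> 1"
  defines "K \<equiv> min ((n + k) div 2) n"
  shows "card (Hom1 n k) =
    (\<Sum>l = nat (ceiling ((real n - 1) / 2)) .. K - 1. card (LP l (n - 1 - l) 0 (k - 1)))"
proof -
  have disjoint: "path_words i (n - 1 - i) 0 (k - 1) \<inter> path_words j (n - 1 - j) 0 (k - 1) = {}"
    if "i \<noteq> j" for i j
    using that by (auto simp: path_words_def)
  have "card (Hom1 n k) = card (step_words n (k - 1))"
    using assms(1,2) by (rule card_Hom1)
  also have "\<dots> = card (\<Union>l \<in> {n div 2 .. K - 1}. path_words l (n - 1 - l) 0 (k - 1))"
    using step_words_by_ups[OF assms(1,2)] by (simp add: K_def)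
  also have "\<dots> = (\<Sum>l = n div 2 .. K - 1. card (path_words l (n - 1 - l) 0 (k - 1)))"
    using disjoint by (intro card_UN_disjoint) (simp_all add: finite_path_words)
  also have "\<dots> = (\<Sum>l = n div 2 .. K - 1. card (LP l (n - 1 - l) 0 (k - 1)))"
    by (simp only: card_LP)
  finally show ?thesis
    unfolding nat_ceiling_half .
qed

end
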